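(* Let $X=\{a_1,\dots,a_\ell\}$ be a finite set of $\ell$ distinct points and $N\ge2$. A probability measure $\gamma$ on $X^N$ is a symmetrized Monge state, i.e. $\gamma=S\big(\sum_{\nu=1}^\ell\frac1\ell\delta_{T_1(a_\nu)}\otimes\cdots\otimes\delta_{T_N(a_\nu)}\big)$ for some bijections $T_1,\dots,T_N:X\to X$, if and only if it is an SAE state with uniform marginal $\bar\lambda$ whose site weights all equal $1/\ell$, i.e. $\gamma=\sum_{\nu=1}^\ell\frac1\ell S(\delta_{T_1(a_\nu)}\otimes\cdots\otimes\delta_{T_N(a_\nu)})$ for some (not necessarily bijective) maps $T_1,\dots,T_N:X\to X$ satisfying $\sum_{\nu=1}^\ell\frac1\ell\lambda^{(\nu)}=\bar\lambda$, where $\lambda^{(\nu)}=\frac1N\sum_{k=1}^N\delta_{T_k(a_\nu)}$.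
   Context: $\bar\lambda=\sum_{i=1}^\ell\frac1\ell\delta_{a_i}$ is the uniform probability measure on $X$. The symmetrization operator is $(S\gamma)(A_1\times\cdots\times A_N)=\frac1{N!}\sum_{\sigma\in S_N}\gamma(A_{\sigma(1)}\times\cdots\times A_{\sigma(N)})$. An SAE state with marginal $\lambda_*$ is a probability measure of the form $\sum_{\nu=1}^\ell\alpha^{(\nu)}S(\delta_{T_1(a_\nu)}\otimes\cdots\otimes\delta_{T_N(a_\nu)})$ with maps $T_k:X\to X$ and site weights $\alpha^{(\nu)}\ge0$ such that $\sum_\nu\alpha^{(\nu)}\lambda^{(\nu)}=\lambda_*$, with $\lambda^{(\nu)}$ as in the claim. *)

theory Defs
  imports Complex_Main "HOL-Combinatorics.Permutations"
begin

text \<open>Finitely supported measures on X^N are represented by their weight functions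
  on N-tuples, encoded as lists of length N.\<close>

definition prob_on :: "'a set \<Rightarrow> nat \<Rightarrow> ('a list \<Rightarrow> real) \<Rightarrow> bool" where
  "prob_on X N \<gamma> \<longleftrightarrow> (\<forall>ys. \<gamma> ys \<ge> 0)
     \<and> (\<forall>ys. \<gamma> ys \<noteq> 0 \<longrightarrow> length ys = N \<and> set ys \<subseteq> X)
     \<and> (\<Sum>ys\<in>{ys. length ys = N \<and> set ys \<subseteq> X}. \<gamma> ys) = 1"

definition tdirac :: "'a list \<Rightarrow> 'a list \<Rightarrow> real" where
  "tdirac xs ys = (if ys = xs then 1 else 0)"

definition symm :: "nat \<Rightarrow> ('a list \<Rightarrow> real) \<Rightarrow> 'a list \<Rightarrow> real" where
  "symm N \<gamma> ys = (if length ys = N then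
      (\<Sum>\<sigma>\<in>{\<sigma>. \<sigma> permutes {..<N}}. \<gamma> (map (\<lambda>i. ys ! \<sigma> i) [0..<N])) / fact N
    else 0)"

text \<open>The tuple (T_1(x),...,T_N(x)) (indices 0..N-1).\<close>
definition tup :: "nat \<Rightarrow> (nat \<Rightarrow> 'a \<Rightarrow> 'a) \<Rightarrow> 'a \<Rightarrow> 'a list" where
  "tup N T x = map (\<lambda>k. T k x) [0..<N]"

definition site_marg :: "nat \<Rightarrow> (nat \<Rightarrow> 'a \<Rightarrow> 'a) \<Rightarrow> 'a \<Rightarrow> 'a \<Rightarrow> real" where
  "site_marg N T x y = (\<Sum>k<N. if T k x = y then 1 else 0) / real N"

definition unif :: "'a set \<Rightarrow> 'a \<Rightarrow> real" where
  "unif X y = (if y \<in> X then 1 / real (card X) else 0)"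

definition monge_state :: "'a set \<Rightarrow> nat \<Rightarrow> (nat \<Rightarrow> 'a \<Rightarrow> 'a) \<Rightarrow> 'a list \<Rightarrow> real" where
  "monge_state X N T = symm N (\<lambda>ys. \<Sum>x\<in>X. (1 / real (card X)) * tdirac (tup N T x) ys)"

definition sae_equal_weights :: "'a set \<Rightarrow> nat \<Rightarrow> (nat \<Rightarrow> 'a \<Rightarrow> 'a) \<Rightarrow> 'a list \<Rightarrow> real" where
  "sae_equal_weights X N T = (\<lambda>ys. \<Sum>x\<in>X. (1 / real (card X)) * symm N (tdirac (tup N T x)) ys)"

end

theory Submission
  imports Defs "HOL-Library.Multiset"
begin

(* Record the tuples (T_1 x, ..., T_N x), x in X, as a bipartite multigraph on X x X with
   an edge x -- T_k x for every k. The uniform-marginal condition says exactly that every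
   right vertex has degree N, and every left vertex has degree N by construction, so the
   multigraph is N-regular. By Hall's theorem a regular bipartite multigraph has a perfect
   matching; removing it leaves an (N-1)-regular one, so the edges split into N perfect
   matchings, i.e. N bijections of X. Listing the tuple at x in the order of these matchings
   only permutes its entries, which the symmetrization S does not see; and since S is linear,
   equal site weights 1/l turn the SAE state into the symmetrized Monge state. *)

lemma inj_on_if_disjoint_images:
  assumes "inj_on f S" "inj_on g T" "f ` S \<inter> g ` T = {}"
  shows "inj_on (\<lambda>x. if x \<in> S then f x else g x) (S \<union> T)"
proof (rule inj_onI)
  fix x y assume "x \<in> S \<union> T" "y \<in> S \<union> T"
    "(if x \<in> S then f x else g x) = (if y \<in> S then f y else g y)"
  then show "x = y"
    using assms by (cases "x \<in> S"; cases "y \<in> S") (auto dest: inj_onD)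
qed

definition hall_condition :: "'i set \<Rightarrow> ('i \<Rightarrow> 'b set) \<Rightarrow> bool" where
  "hall_condition I A \<longleftrightarrow> (\<forall>S\<subseteq>I. card S \<le> card (\<Union>(A ` S)))"

lemma hall_condition_remove_critical:
  assumes fin: "finite I" "\<forall>x\<in>I. finite (A x)" and hall: "hall_condition I A"
    and S: "S \<subseteq> I" "card (\<Union>(A ` S)) \<le> card S"
  shows "hall_condition (I - S) (\<lambda>x. A x - \<Union>(A ` S))"
  unfolding hall_condition_def
proof (intro allI impI)
  fix T assume T: "T \<subseteq> I - S"
  have finTS: "finite T" "finite S" using T S(1) fin(1) finite_subset by blast+
  have sub: "\<Union>(A ` S) \<subseteq> \<Union>(A ` (T \<union> S))" by auto
  have fin_union: "finite (\<Union>(A ` (T \<union> S)))" using finTS T S(1) fin(2) by auto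
  have "card T + card S = card (T \<union> S)" using T finTS by (subst card_Un_disjoint) auto
  also have "\<dots> \<le> card (\<Union>(A ` (T \<union> S)))" using hall T S(1) unfolding hall_condition_def by blast
  also have "\<dots> = card (\<Union>(A ` (T \<union> S)) - \<Union>(A ` S)) + card (\<Union>(A ` S))"
    using card_Diff_subset[OF finite_subset[OF sub fin_union] sub] card_mono[OF fin_union sub] by linarith
  also have "\<Union>(A ` (T \<union> S)) - \<Union>(A ` S) = \<Union>((\<lambda>x. A x - \<Union>(A ` S)) ` T)" by auto
  finally show "card T \<le> card (\<Union>((\<lambda>x. A x - \<Union>(A ` S)) ` T))" using S(2) by linarith
qed

lemma hall_condition_remove_point:
  assumes fin: "finite I" "\<forall>x\<in>I. finite (A x)"
    and surplus: "\<And>S. S \<subseteq> I \<Longrightarrow> S \<noteq> {} \<Longrightarrow> S \<noteq> I \<Longrightarrow> card S < card (\<Union>(A ` S))"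
    and x0: "x0 \<in> I"
  shows "hall_condition (I - {x0}) (\<lambda>x. A x - {a})"
  unfolding hall_condition_def
proof (intro allI impI)
  fix T assume T: "T \<subseteq> I - {x0}"
  show "card T \<le> card (\<Union>((\<lambda>x. A x - {a}) ` T))"
  proof (cases "T = {}")
    case False
    have "finite (\<Union>(A ` T))" using T fin by (auto intro: finite_subset)
    then have "card (\<Union>(A ` T)) \<le> card (\<Union>(A ` T) - {a}) + 1"
      by (cases "a \<in> \<Union>(A ` T)") (simp_all add: card_Suc_Diff1)
    moreover have "card T < card (\<Union>(A ` T))" using surplus[of T] T False x0 by auto
    moreover have "\<Union>((\<lambda>x. A x - {a}) ` T) = \<Union>(A ` T) - {a}" by auto
    ultimately show ?thesis by simp
  qed simp
qed

theorem hall_marriage: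
  assumes "finite I" "\<forall>x\<in>I. finite (A x)" "hall_condition I A"
  shows "\<exists>f. inj_on f I \<and> (\<forall>x\<in>I. f x \<in> A x)"
  using assms
proof (induction "card I" arbitrary: I A rule: less_induct)
  case less
  show ?case
  proof (cases "\<exists>S. S \<subseteq> I \<and> S \<noteq> {} \<and> S \<noteq> I \<and> card (\<Union>(A ` S)) \<le> card S")
    case True
    then obtain S where S: "S \<subseteq> I" "S \<noteq> {}" "S \<noteq> I" "card (\<Union>(A ` S)) \<le> card S" by blast
    have "finite S" using S(1) less.prems(1) finite_subset by blast
    have "card S < card I" using S(1,3) less.prems(1) by (simp add: psubset_card_mono psubsetI)
    have "card (I - S) < card I" using S(1,2) less.prems(1) by (intro psubset_card_mono) auto
    have "hall_condition S A" using less.prems(3) S(1) unfolding hall_condition_def by blast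
    moreover have "\<forall>x\<in>S. finite (A x)" using less.prems(2) S(1) by blast
    ultimately obtain f1 where f1: "inj_on f1 S" "\<forall>x\<in>S. f1 x \<in> A x"
      using less.hyps[OF \<open>card S < card I\<close> \<open>finite S\<close>] by blast
    have "\<forall>x\<in>I - S. finite (A x - \<Union>(A ` S))" using less.prems(2) by blast
    then obtain f2 where f2: "inj_on f2 (I - S)" "\<forall>x\<in>I - S. f2 x \<in> A x - \<Union>(A ` S)"
      using less.hyps[OF \<open>card (I - S) < card I\<close> finite_Diff[OF less.prems(1)] _
        hall_condition_remove_critical[OF less.prems S(1,4)]] by blast
    have "f1 ` S \<subseteq> \<Union>(A ` S)" using f1(2) by blast
    moreover have "f2 ` (I - S) \<inter> \<Union>(A ` S) = {}" using f2(2) by blast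
    ultimately have "f1 ` S \<inter> f2 ` (I - S) = {}" by blast
    then have "inj_on (\<lambda>x. if x \<in> S then f1 x else f2 x) (S \<union> (I - S))"
      using inj_on_if_disjoint_images[OF f1(1) f2(1)] by blast
    moreover have "S \<union> (I - S) = I" using S(1) by blast
    ultimately
    show ?thesis using f1(2) f2(2) by (intro exI[of _ "\<lambda>x. if x \<in> S then f1 x else f2 x"]) auto
  next
    case False
    show ?thesis
    proof (cases "I = {}")
      case False
      then obtain x0 where x0: "x0 \<in> I" by blast
      have "card {x0} \<le> card (A x0)" using less.prems(3) x0 unfolding hall_condition_def by force
      then obtain a where a: "a \<in> A x0" by fastforce
      have surplus: "\<And>S. S \<subseteq> I \<Longrightarrow> S \<noteq> {} \<Longrightarrow> S \<noteq> I \<Longrightarrow> card S < card (\<Union>(A ` S))"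
        using \<open>\<not> (\<exists>S. _)\<close> by (meson not_le)
      have "\<forall>x\<in>I - {x0}. finite (A x - {a})" using less.prems(2) by blast
      then obtain f where f: "inj_on f (I - {x0})" "\<forall>x\<in>I - {x0}. f x \<in> A x - {a}"
        using less.hyps[OF card_Diff1_less[OF less.prems(1) x0] finite_Diff[OF less.prems(1)] _
          hall_condition_remove_point[OF less.prems(1,2) surplus x0]] by blast
      then have "inj_on (f(x0 := a)) I" "\<forall>x\<in>I. (f(x0 := a)) x \<in> A x"
        using a x0 unfolding inj_on_def by auto
      then show ?thesis by blast
    qed simp
  qed
qed

lemma size_eq_sum_count:
  assumes "finite U" "set_mset M \<subseteq> U"
  shows "size M = (\<Sum>y\<in>U. count M y)"
proof -
  have "size M = (\<Sum>y\<in>set_mset M. count M y)" by (rule size_multiset_overloaded_eq)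
  also have "\<dots> = (\<Sum>y\<in>U. count M y)"
    using assms by (intro sum.mono_neutral_left) (auto simp: not_in_iff)
  finally show ?thesis .
qed

lemma sum_indicator_bij_betw:
  assumes "finite X" "bij_betw g X X"
  shows "(\<Sum>x\<in>X. if g x = y then 1 else 0) = (if y \<in> X then 1 else (0 :: 'b :: comm_semiring_1))"
proof -
  have "(\<Sum>x\<in>X. if g x = y then 1 else 0) = (\<Sum>z\<in>g ` X. if z = y then 1 else (0 :: 'b))"
    by (simp add: sum.reindex[OF bij_betw_imp_inj_on[OF assms(2)]])
  also have "g ` X = X" using assms(2) by (simp add: bij_betw_def)
  finally show ?thesis using assms(1) by (simp add: sum.delta)
qed

(* M x is the multiset of right neighbours of the left vertex x. *)
definition regular_bipartite :: "'a set \<Rightarrow> nat \<Rightarrow> ('a \<Rightarrow> 'a multiset) \<Rightarrow> bool" where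
  "regular_bipartite X n M \<longleftrightarrow> (\<forall>x\<in>X. size (M x) = n \<and> set_mset (M x) \<subseteq> X)
     \<and> (\<forall>y\<in>X. (\<Sum>x\<in>X. count (M x) y) = n)"

lemma regular_bipartite_hall_condition:
  assumes fin: "finite X" and reg: "regular_bipartite X (Suc n) M"
  shows "hall_condition X (\<lambda>x. set_mset (M x))"
  unfolding hall_condition_def
proof (intro allI impI)
  fix S assume S: "S \<subseteq> X"
  define U where "U = \<Union>((\<lambda>x. set_mset (M x)) ` S)"
  have UX: "U \<subseteq> X" using S reg unfolding U_def regular_bipartite_def by blast
  have "Suc n * card S = (\<Sum>x\<in>S. size (M x))"
    using S reg by (simp add: regular_bipartite_def subset_iff)
  also have "\<dots> = (\<Sum>x\<in>S. \<Sum>y\<in>U. count (M x) y)"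
    using finite_subset[OF UX fin] by (intro sum.cong refl size_eq_sum_count) (auto simp: U_def)
  also have "\<dots> = (\<Sum>y\<in>U. \<Sum>x\<in>S. count (M x) y)" by (rule sum.swap)
  also have "\<dots> \<le> (\<Sum>y\<in>U. \<Sum>x\<in>X. count (M x) y)"
    using S fin by (intro sum_mono sum_mono2) auto
  also have "\<dots> = Suc n * card U" using UX reg by (simp add: regular_bipartite_def subset_iff)
  finally show "card S \<le> card U" by (simp only: Suc_mult_le_cancel1)
qed

lemma regular_bipartite_perfect_matching:
  assumes fin: "finite X" and reg: "regular_bipartite X (Suc n) M"
  obtains g where "bij_betw g X X" "\<forall>x\<in>X. g x \<in># M x"
proof -
  obtain g where g: "inj_on g X" "\<forall>x\<in>X. g x \<in># M x"
    using hall_marriage[OF fin _ regular_bipartite_hall_condition[OF assms]] by auto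
  have "g ` X \<subseteq> X" using g(2) reg unfolding regular_bipartite_def by blast
  then have "g ` X = X" using card_subset_eq[OF fin] card_image[OF g(1)] by blast
  then show ?thesis using that g unfolding bij_betw_def by blast
qed

lemma regular_bipartite_remove_matching:
  assumes fin: "finite X" and reg: "regular_bipartite X (Suc n) M"
    and g: "bij_betw g X X" "\<forall>x\<in>X. g x \<in># M x"
  shows "regular_bipartite X n (\<lambda>x. M x - {#g x#})"
  unfolding regular_bipartite_def
proof (intro conjI ballI)
  fix x assume "x \<in> X"
  then show "size (M x - {#g x#}) = n" "set_mset (M x - {#g x#}) \<subseteq> X"
    using reg g(2) unfolding regular_bipartite_def by (auto simp: size_Diff_singleton dest: in_diffD)
next
  fix y assume y: "y \<in> X"
  have "count (M x - {#g x#}) y + (if g x = y then 1 else 0) = count (M x) y" if "x \<in> X" for x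
    using g(2) that by (auto simp: Suc_le_eq)
  then have "(\<Sum>x\<in>X. count (M x - {#g x#}) y) + (\<Sum>x\<in>X. if g x = y then 1 else 0) = Suc n"
    using reg y by (simp add: regular_bipartite_def sum.distrib[symmetric])
  moreover have "(\<Sum>x\<in>X. if g x = y then 1 else 0) = (1 :: nat)"
    using sum_indicator_bij_betw[OF fin g(1), of y] by (simp only: y if_True)
  ultimately show "(\<Sum>x\<in>X. count (M x - {#g x#}) y) = n" by linarith
qed

theorem regular_bipartite_decomposition:
  assumes "finite X" "regular_bipartite X n M"
  shows "\<exists>L. (\<forall>x\<in>X. mset (L x) = M x) \<and> (\<forall>k<n. bij_betw (\<lambda>x. L x ! k) X X)"
  using assms(2)
proof (induction n arbitrary: M)
  case 0
  then show ?case by (intro exI[of _ "\<lambda>_. []"]) (simp add: regular_bipartite_def)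
next
  case (Suc n)
  obtain g where g: "bij_betw g X X" "\<forall>x\<in>X. g x \<in># M x"
    using regular_bipartite_perfect_matching[OF assms(1) Suc.prems] by blast
  obtain L where L: "\<forall>x\<in>X. mset (L x) = M x - {#g x#}" "\<forall>k<n. bij_betw (\<lambda>x. L x ! k) X X"
    using Suc.IH[OF regular_bipartite_remove_matching[OF assms(1) Suc.prems g]] by blast
  have "\<forall>x\<in>X. mset (g x # L x) = M x" using L(1) g(2) by simp
  moreover have "\<forall>k<Suc n. bij_betw (\<lambda>x. (g x # L x) ! k) X X"
    using g(1) L(2) by (auto simp: less_Suc_eq_0_disj)
  ultimately show ?case by (intro exI[of _ "\<lambda>x. g x # L x"]) simp
qed

lemma permute_list_eq_iff:
  assumes p: "p permutes {..<length xs}" and len: "length ys = length xs"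
  shows "permute_list p xs = permute_list p ys \<longleftrightarrow> xs = ys"
proof
  assume eq: "permute_list p xs = permute_list p ys"
  show "xs = ys"
  proof (rule nth_equalityI)
    fix j assume "j < length xs"
    then obtain i where "i < length xs" "p i = j"
      using p by (metis lessThan_iff permutes_inverses(1) permutes_in_image permutes_inv)
    then show "xs ! j = ys ! j"
      using eq p len by (metis permute_list_nth)
  qed (use len in simp)
qed simp

lemma map_upt_permute_list:
  assumes "p permutes {..<N}"
  shows "map (\<lambda>i. f (p i)) [0..<N] = permute_list p (map f [0..<N])"
  using permutes_in_image[OF assms] by (simp add: permute_list_def)

lemma symm_tdirac_permute_list:
  assumes p: "p permutes {..<N}" and len: "length xs = N"
  shows "symm N (tdirac (permute_list p xs)) = symm N (tdirac xs)"
proof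
  fix ys :: "'a list"
  have "(\<Sum>\<sigma>\<in>{\<sigma>. \<sigma> permutes {..<N}}. tdirac (permute_list p xs) (map (\<lambda>i. ys ! \<sigma> i) [0..<N]))
      = (\<Sum>\<sigma>\<in>{\<sigma>. \<sigma> permutes {..<N}}. tdirac (permute_list p xs) (map (\<lambda>i. ys ! (\<sigma> \<circ> p) i) [0..<N]))"
    by (rule sum_permutations_compose_right[OF p])
  also have "\<dots> = (\<Sum>\<sigma>\<in>{\<sigma>. \<sigma> permutes {..<N}}. tdirac xs (map (\<lambda>i. ys ! \<sigma> i) [0..<N]))"
    using p len map_upt_permute_list[OF p, of "\<lambda>i. ys ! _ i"]
    by (simp add: tdirac_def permute_list_eq_iff)
  finally show "symm N (tdirac (permute_list p xs)) ys = symm N (tdirac xs) ys"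
    unfolding symm_def by simp
qed

lemma symm_tdirac_mset_eq:
  assumes "mset xs = mset ys" "length ys = N"
  shows "symm N (tdirac xs) = symm N (tdirac ys)"
proof -
  obtain p where "p permutes {..<length ys}" "permute_list p ys = xs"
    using mset_eq_permutation[OF assms(1)] by blast
  then show ?thesis using symm_tdirac_permute_list assms(2) by blast
qed

lemma sae_equal_weights_cong_mset:
  assumes "\<forall>x\<in>X. mset (tup N T x) = mset (tup N T' x)"
  shows "sae_equal_weights X N T = sae_equal_weights X N T'"
  unfolding sae_equal_weights_def
proof (intro ext sum.cong refl)
  fix ys x assume "x \<in> X"
  then have "symm N (tdirac (tup N T x)) = symm N (tdirac (tup N T' x))"
    using assms by (intro symm_tdirac_mset_eq) (auto simp: tup_def)
  then show "1 / real (card X) * symm N (tdirac (tup N T x)) ys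
      = 1 / real (card X) * symm N (tdirac (tup N T' x)) ys" by simp
qed

lemma monge_state_eq_sae_equal_weights: "monge_state X N T = sae_equal_weights X N T"
  unfolding monge_state_def sae_equal_weights_def symm_def
  by (auto simp: sum.swap[of _ X] sum_distrib_left sum_divide_distrib mult.commute)

lemma count_mset_tup: "count (mset (tup N T x)) y = (\<Sum>k<N. if T k x = y then 1 else 0)"
  by (induction N) (auto simp: tup_def)

lemma sum_site_marg:
  "(\<Sum>x\<in>X. (1 / real (card X)) * site_marg N T x y)
     = real (\<Sum>x\<in>X. count (mset (tup N T x)) y) / (real (card X) * real N)"
  by (simp add: site_marg_def count_mset_tup sum_distrib_left sum_divide_distrib)
    (auto intro!: sum.cong)

lemma uniform_site_marginal_iff_regular:
  assumes fin: "finite X" "X \<noteq> {}" and "N > 0" and T: "\<forall>k<N. \<forall>x\<in>X. T k x \<in> X"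
  shows "(\<forall>y. (\<Sum>x\<in>X. (1 / real (card X)) * site_marg N T x y) = unif X y)
     \<longleftrightarrow> regular_bipartite X N (\<lambda>x. mset (tup N T x))"
proof -
  have pos: "real (card X) > 0" "real N > 0" using fin \<open>N > 0\<close> by (simp_all add: card_gt_0_iff)
  have outside: "(\<Sum>x\<in>X. count (mset (tup N T x)) y) = 0" if "y \<notin> X" for y
    using T that by (intro sum.neutral ballI) (auto simp: count_eq_zero_iff tup_def simp del: mset_map)
  have "(\<Sum>x\<in>X. (1 / real (card X)) * site_marg N T x y) = unif X y
        \<longleftrightarrow> (y \<in> X \<longrightarrow> (\<Sum>x\<in>X. count (mset (tup N T x)) y) = N)" for y
  proof (cases "y \<in> X")
    case True
    then show ?thesis unfolding sum_site_marg unif_def using pos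
      by (auto simp: field_simps simp flip: of_nat_sum)
  next
    case False
    then show ?thesis unfolding sum_site_marg unif_def using outside by simp
  qed
  moreover have "\<forall>x\<in>X. size (mset (tup N T x)) = N \<and> set_mset (mset (tup N T x)) \<subseteq> X"
    using T by (auto simp: tup_def)
  ultimately show ?thesis unfolding regular_bipartite_def by blast
qed

lemma regular_bipartite_tup_bij:
  assumes "finite X" "\<forall>k<N. bij_betw (T k) X X"
  shows "regular_bipartite X N (\<lambda>x. mset (tup N T x))"
  unfolding regular_bipartite_def
proof (intro conjI ballI)
  fix x assume "x \<in> X"
  then show "size (mset (tup N T x)) = N" "set_mset (mset (tup N T x)) \<subseteq> X"
    using assms by (auto simp: tup_def bij_betw_apply)
next
  fix y assume "y \<in> X"
  have "(\<Sum>x\<in>X. count (mset (tup N T x)) y) = (\<Sum>k<N. \<Sum>x\<in>X. if T k x = y then 1 else 0)"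
    by (simp add: count_mset_tup sum.swap[of _ X])
  also have "\<dots> = N" using assms \<open>y \<in> X\<close> by (simp add: sum_indicator_bij_betw)
  finally show "(\<Sum>x\<in>X. count (mset (tup N T x)) y) = N" .
qed

lemma bij_rearrangement_of_regular_tup:
  assumes "finite X" "regular_bipartite X N (\<lambda>x. mset (tup N T x))"
  obtains T' where "\<forall>k<N. bij_betw (T' k) X X" "sae_equal_weights X N T' = sae_equal_weights X N T"
proof -
  obtain L where L: "\<forall>x\<in>X. mset (L x) = mset (tup N T x)" "\<forall>k<N. bij_betw (\<lambda>x. L x ! k) X X"
    using regular_bipartite_decomposition[OF assms] by blast
  define T' where "T' = (\<lambda>k x. L x ! k)"
  have "tup N T' x = L x" if "x \<in> X" for x
  proof -
    have "length (L x) = N" using mset_eq_length[OF L(1)[rule_format, OF that]] by (simp add: tup_def)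
    then show ?thesis unfolding tup_def T'_def using map_nth[of "L x"] by simp
  qed
  then have "sae_equal_weights X N T' = sae_equal_weights X N T"
    using L(1) by (intro sae_equal_weights_cong_mset) simp
  moreover have "\<forall>k<N. bij_betw (T' k) X X" using L(2) unfolding T'_def .
  ultimately show ?thesis using that by blast
qed

theorem theorem6p1:
  fixes X :: "'a set" and N :: nat and \<gamma> :: "'a list \<Rightarrow> real"
  assumes "finite X" and "X \<noteq> {}" and "N \<ge> 2" and "prob_on X N \<gamma>"
  shows "(\<exists>T. (\<forall>k<N. bij_betw (T k) X X) \<and> \<gamma> = monge_state X N T)
     \<longleftrightarrow> (\<exists>T. (\<forall>k<N. \<forall>x\<in>X. T k x \<in> X)
              \<and> (\<forall>y. (\<Sum>x\<in>X. (1 / real (card X)) * site_marg N T x y) = unif X y)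
              \<and> \<gamma> = sae_equal_weights X N T)"
proof
  have "N > 0" using assms(3) by simp
  assume "\<exists>T. (\<forall>k<N. bij_betw (T k) X X) \<and> \<gamma> = monge_state X N T"
  then obtain T where T: "\<forall>k<N. bij_betw (T k) X X" "\<gamma> = monge_state X N T" by blast
  have into: "\<forall>k<N. \<forall>x\<in>X. T k x \<in> X" using T(1) by (meson bij_betw_apply)
  then have "\<forall>y. (\<Sum>x\<in>X. (1 / real (card X)) * site_marg N T x y) = unif X y"
    using uniform_site_marginal_iff_regular[OF assms(1,2) \<open>N > 0\<close>]
      regular_bipartite_tup_bij[OF assms(1) T(1)] by blast
  then show "\<exists>T. (\<forall>k<N. \<forall>x\<in>X. T k x \<in> X)
      \<and> (\<forall>y. (\<Sum>x\<in>X. (1 / real (card X)) * site_marg N T x y) = unif X y)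
      \<and> \<gamma> = sae_equal_weights X N T"
    using into T(2) by (auto simp: monge_state_eq_sae_equal_weights)
next
  have "N > 0" using assms(3) by simp
  assume "\<exists>T. (\<forall>k<N. \<forall>x\<in>X. T k x \<in> X)
      \<and> (\<forall>y. (\<Sum>x\<in>X. (1 / real (card X)) * site_marg N T x y) = unif X y)
      \<and> \<gamma> = sae_equal_weights X N T"
  then obtain T where T: "\<forall>k<N. \<forall>x\<in>X. T k x \<in> X"
      "\<forall>y. (\<Sum>x\<in>X. (1 / real (card X)) * site_marg N T x y) = unif X y"
      "\<gamma> = sae_equal_weights X N T" by blast
  then have "regular_bipartite X N (\<lambda>x. mset (tup N T x))"
    using uniform_site_marginal_iff_regular[OF assms(1,2) \<open>N > 0\<close>] by blast
  then obtain T' where "\<forall>k<N. bij_betw (T' k) X X" "\<gamma> = sae_equal_weights X N T'"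
    using bij_rearrangement_of_regular_tup[OF assms(1)] T(3) by metis
  then show "\<exists>T. (\<forall>k<N. bij_betw (T k) X X) \<and> \<gamma> = monge_state X N T"
    by (auto simp: monge_state_eq_sae_equal_weights)
qed

end
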